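(* Let $\lambda>1$. For all $\mu\in\mathscr P(\mathcal K)$ and $\pi\in\Delta_k$, $$\Psi^\lambda_\star(\mu)\le\frac{2^\lambda\,\Delta_\star(\mu)^{\lambda-1}\,\Delta(\pi,\mu)}{\mathrm I(\pi,\mu)},$$ in both the standard and Rustichini settings (with the conventions $0/0=0$ and $c/0=\infty$ for $c>0$).
   Context: A $k$-action partial monitoring game: set $\mathcal Z$, loss $\mathcal L:[k]\times\mathcal Z\to[0,1]$, signal $\mathcal S:[k]\times\mathcal Z\to\Sigma$, $k$ finite. $\mathcal K$ = finitely supported probability distributions on $\mathcal Z$; $\Delta_k$ = probability simplex on $[k]$; $\mathcal L(a,x)=\sum_z x(z)\mathcal L(a,z)$, $\mathcal L(\pi,x)=\sum_a\pi(a)\mathcal L(a,x)$; $\mathcal S(a,x)$ = law of $\mathcal S(a,z)$, $z\sim x$. Standard setting: $\mathcal Z$ arbitrary, $\mathcal V(\pi,x)=\mathcal L(\pi,x)$, $\mathcal V_\star(x)=\min_a\mathcal L(a,x)$. Rustichini setting: $\mathcal Z$ finite, $x\,\mathrm R\,y$ iff $\mathcal S(a,x)=\mathcal S(a,y)\ \forall a$, $\mathcal V(\pi,x)=\sup_{y\,\mathrm R\,x}\mathcal L(\pi,y)$, $\mathcal V_\star(x)=\min_{\pi\in\Delta_k}\mathcal V(\pi,x)$. $\mathscr P(\mathcal K)$ = finitely supported probability measures on $\mathcal K$. For $\mu\in\mathscr P(\mathcal K)$: $\mathcal S(a,\mu)=\mathcal S(a,\sum_x\mu(x)x)$; $\mathrm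 I(\pi,\mu)=\sum_a\pi(a)\sum_{x\in\operatorname{spt}\mu}\operatorname{KL}(\mathcal S(a,\mu),\mathcal S(a,x))$; $\Delta(\pi,\mu)=\sum_x\mu(x)(\mathcal V(\pi,x)-\mathcal V_\star(x))$; $\Delta_\star(\mu)=\min_{\pi\in\Delta_k}\Delta(\pi,\mu)$; $\Psi^\lambda(\pi,\mu)=\Delta(\pi,\mu)^\lambda/\mathrm I(\pi,\mu)$; $\Psi^\lambda_\star(\mu)=\inf_{\pi\in\Delta_k}\Psi^\lambda(\pi,\mu)$. *)

theory Defs
  imports Complex_Main "HOL-Library.Extended_Real"
begin

text \<open>Actions are the naturals a < k.\<close>

definition spt :: "('b \<Rightarrow> real) \<Rightarrow> 'b set" where
  "spt f = {z. f z \<noteq> 0}"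

definition inK :: "('z \<Rightarrow> real) \<Rightarrow> bool" where
  "inK x \<longleftrightarrow> (\<forall>z. 0 \<le> x z) \<and> finite (spt x) \<and> sum x (spt x) = 1"

definition inPK :: "(('z \<Rightarrow> real) \<Rightarrow> real) \<Rightarrow> bool" where
  "inPK mu \<longleftrightarrow> (\<forall>x. 0 \<le> mu x) \<and> finite (spt mu) \<and> sum mu (spt mu) = 1
      \<and> (\<forall>x\<in>spt mu. inK x)"

definition simplex :: "nat \<Rightarrow> (nat \<Rightarrow> real) set" where
  "simplex k = {p. (\<forall>a<k. 0 \<le> p a) \<and> (\<Sum>a<k. p a) = 1}"

definition lossx :: "(nat \<Rightarrow> 'z \<Rightarrow> real) \<Rightarrow> nat \<Rightarrow> ('z \<Rightarrow> real) \<Rightarrow> real" where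
  "lossx L a x = (\<Sum>z\<in>spt x. x z * L a z)"

definition lossp :: "nat \<Rightarrow> (nat \<Rightarrow> 'z \<Rightarrow> real) \<Rightarrow> (nat \<Rightarrow> real) \<Rightarrow> ('z \<Rightarrow> real) \<Rightarrow> real" where
  "lossp k L p x = (\<Sum>a<k. p a * lossx L a x)"

definition sig :: "(nat \<Rightarrow> 'z \<Rightarrow> 's) \<Rightarrow> nat \<Rightarrow> ('z \<Rightarrow> real) \<Rightarrow> 's \<Rightarrow> real" where
  "sig S a x = (\<lambda>s. \<Sum>z\<in>{z\<in>spt x. S a z = s}. x z)"

definition mean :: "(('z \<Rightarrow> real) \<Rightarrow> real) \<Rightarrow> 'z \<Rightarrow> real" where
  "mean mu = (\<lambda>z. \<Sum>x\<in>spt mu. mu x * x z)"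

definition KL :: "('s \<Rightarrow> real) \<Rightarrow> ('s \<Rightarrow> real) \<Rightarrow> ereal" where
  "KL p q = (if \<exists>s. p s > 0 \<and> q s = 0 then \<infinity>
             else ereal (\<Sum>s\<in>spt p. p s * ln (p s / q s)))"

definition Info :: "nat \<Rightarrow> (nat \<Rightarrow> 'z \<Rightarrow> 's) \<Rightarrow> (nat \<Rightarrow> real) \<Rightarrow> (('z \<Rightarrow> real) \<Rightarrow> real) \<Rightarrow> ereal" where
  "Info k S p mu = (\<Sum>a<k. ereal (p a) * (\<Sum>x\<in>spt mu. KL (sig S a (mean mu)) (sig S a x)))"

datatype setting = Standard | Rustichini

definition Rel :: "nat \<Rightarrow> (nat \<Rightarrow> 'z \<Rightarrow> 's) \<Rightarrow> ('z \<Rightarrow> real) \<Rightarrow> ('z \<Rightarrow> real) \<Rightarrow> bool" where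
  "Rel k S x y \<longleftrightarrow> (\<forall>a<k. sig S a x = sig S a y)"

definition Val :: "setting \<Rightarrow> nat \<Rightarrow> (nat \<Rightarrow> 'z \<Rightarrow> real) \<Rightarrow> (nat \<Rightarrow> 'z \<Rightarrow> 's)
    \<Rightarrow> (nat \<Rightarrow> real) \<Rightarrow> ('z \<Rightarrow> real) \<Rightarrow> real" where
  "Val st k L S p x = (case st of
      Standard \<Rightarrow> lossp k L p x
    | Rustichini \<Rightarrow> Sup {lossp k L p y | y. inK y \<and> Rel k S y x})"

definition Valstar :: "setting \<Rightarrow> nat \<Rightarrow> (nat \<Rightarrow> 'z \<Rightarrow> real) \<Rightarrow> (nat \<Rightarrow> 'z \<Rightarrow> 's)
    \<Rightarrow> ('z \<Rightarrow> real) \<Rightarrow> real" where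
  "Valstar st k L S x = (case st of
      Standard \<Rightarrow> Min ((\<lambda>a. lossx L a x) ` {..<k})
    | Rustichini \<Rightarrow> Inf ((\<lambda>p. Val Rustichini k L S p x) ` simplex k))"

definition Gap :: "setting \<Rightarrow> nat \<Rightarrow> (nat \<Rightarrow> 'z \<Rightarrow> real) \<Rightarrow> (nat \<Rightarrow> 'z \<Rightarrow> 's)
    \<Rightarrow> (nat \<Rightarrow> real) \<Rightarrow> (('z \<Rightarrow> real) \<Rightarrow> real) \<Rightarrow> real" where
  "Gap st k L S p mu = (\<Sum>x\<in>spt mu. mu x * (Val st k L S p x - Valstar st k L S x))"

definition Gapstar :: "setting \<Rightarrow> nat \<Rightarrow> (nat \<Rightarrow> 'z \<Rightarrow> real) \<Rightarrow> (nat \<Rightarrow> 'z \<Rightarrow> 's)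
    \<Rightarrow> (('z \<Rightarrow> real) \<Rightarrow> real) \<Rightarrow> real" where
  "Gapstar st k L S mu = Inf ((\<lambda>p. Gap st k L S p mu) ` simplex k)"

definition ediv :: "real \<Rightarrow> ereal \<Rightarrow> ereal" where
  "ediv c I = (if I = 0 then (if c = 0 then 0 else \<infinity>)
               else if I = \<infinity> then 0 else ereal c / I)"

definition Psi :: "real \<Rightarrow> setting \<Rightarrow> nat \<Rightarrow> (nat \<Rightarrow> 'z \<Rightarrow> real) \<Rightarrow> (nat \<Rightarrow> 'z \<Rightarrow> 's)
    \<Rightarrow> (nat \<Rightarrow> real) \<Rightarrow> (('z \<Rightarrow> real) \<Rightarrow> real) \<Rightarrow> ereal" where
  "Psi lam st k L S p mu = ediv (Gap st k L S p mu powr lam) (Info k S p mu)"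

definition Psistar :: "real \<Rightarrow> setting \<Rightarrow> nat \<Rightarrow> (nat \<Rightarrow> 'z \<Rightarrow> real) \<Rightarrow> (nat \<Rightarrow> 'z \<Rightarrow> 's)
    \<Rightarrow> (('z \<Rightarrow> real) \<Rightarrow> real) \<Rightarrow> ereal" where
  "Psistar lam st k L S mu = (INF p\<in>simplex k. Psi lam st k L S p mu)"

end

theory Submission
  imports Defs "HOL-Analysis.Function_Topology" "HOL-Analysis.Elementary_Normed_Spaces"
begin

text \<open>Let \<open>q\<close> minimise \<open>\<Delta>(\<cdot>,\<mu>)\<close> over the simplex and mix it with \<open>\<pi>\<close>: the policy
  \<open>\<pi>' = (1 - \<epsilon>) q + \<epsilon> \<pi>\<close> with \<open>\<epsilon> = \<Delta>\<^sub>\<star>(\<mu>) / \<Delta>(\<pi>,\<mu>)\<close>.  Since \<open>\<Delta>(\<cdot>,\<mu>)\<close> is convex,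
  \<open>\<Delta>(\<pi>',\<mu>) \<le> (1 - \<epsilon>) \<Delta>\<^sub>\<star>(\<mu>) + \<epsilon> \<Delta>(\<pi>,\<mu>) \<le> 2 \<Delta>\<^sub>\<star>(\<mu>)\<close>, and since \<open>I(\<cdot>,\<mu>)\<close> is linear
  with nonnegative coefficients, \<open>I(\<pi>',\<mu>) \<ge> \<epsilon> I(\<pi>,\<mu>)\<close>.  Hence
  \<open>\<Psi>\<^sup>\<lambda>(\<pi>',\<mu>) \<le> (2 \<Delta>\<^sub>\<star>(\<mu>))\<^sup>\<lambda> / (\<epsilon> I(\<pi>,\<mu>))\<close>, which is the claimed bound.  The minimiser
  exists because \<open>\<Delta>(\<cdot>,\<mu>)\<close> is 1-Lipschitz for the \<open>\<ell>\<^sub>1\<close>-distance on the (compact) simplex;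
  in the Rustichini setting both convexity and the Lipschitz bound pass to the supremum.\<close>

definition unit_loss :: "(nat \<Rightarrow> 'z \<Rightarrow> real) \<Rightarrow> bool" where
  "unit_loss L \<longleftrightarrow> (\<forall>a z. 0 \<le> L a z \<and> L a z \<le> 1)"

lemma lossx_nonneg_le_one:
  assumes "inK y" "unit_loss L"
  shows "0 \<le> lossx L a y \<and> lossx L a y \<le> 1"
proof -
  have y: "\<And>z. 0 \<le> y z" "sum y (spt y) = 1" using assms(1) by (auto simp: inK_def)
  have "0 \<le> lossx L a y" unfolding lossx_def using y assms(2) by (intro sum_nonneg) (auto simp: unit_loss_def)
  moreover have "lossx L a y \<le> sum y (spt y)" unfolding lossx_def
    using y assms(2) by (intro sum_mono) (simp add: mult_left_le unit_loss_def)
  ultimately show ?thesis using y by simp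
qed

lemma lossp_le_plus_dist:
  assumes "inK y" "unit_loss L"
  shows "lossp k L p y \<le> lossp k L q y + (\<Sum>a<k. \<bar>p a - q a\<bar>)"
proof -
  have "lossp k L p y - lossp k L q y = (\<Sum>a<k. (p a - q a) * lossx L a y)"
    unfolding lossp_def by (simp add: sum_subtractf left_diff_distrib)
  also have "\<dots> \<le> (\<Sum>a<k. \<bar>p a - q a\<bar>)"
  proof (intro sum_mono)
    fix a
    have "(p a - q a) * lossx L a y \<le> \<bar>p a - q a\<bar> * lossx L a y"
      using lossx_nonneg_le_one[OF assms] by (intro mult_right_mono) auto
    also have "\<dots> \<le> \<bar>p a - q a\<bar>"
      using lossx_nonneg_le_one[OF assms] by (simp add: mult_left_le)
    finally show "(p a - q a) * lossx L a y \<le> \<bar>p a - q a\<bar>" .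
  qed
  finally show ?thesis by simp
qed

lemma lossp_nonneg:
  assumes "inK y" "unit_loss L" "p \<in> simplex k"
  shows "0 \<le> lossp k L p y"
  unfolding lossp_def using assms lossx_nonneg_le_one[OF assms(1,2)]
  by (intro sum_nonneg) (auto simp: simplex_def)

lemma lossp_mix:
  "lossp k L (\<lambda>a. (1 - e) * q a + e * p a) y = (1 - e) * lossp k L q y + e * lossp k L p y"
  unfolding lossp_def by (simp add: distrib_right mult.assoc sum.distrib sum_distrib_left)

definition indist_losses ::
    "nat \<Rightarrow> (nat \<Rightarrow> 'z \<Rightarrow> real) \<Rightarrow> (nat \<Rightarrow> 'z \<Rightarrow> 's) \<Rightarrow> (nat \<Rightarrow> real) \<Rightarrow> ('z \<Rightarrow> real) \<Rightarrow> real set" where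
  "indist_losses k L S p x = {lossp k L p y | y. inK y \<and> Rel k S y x}"

lemma Val_Rustichini: "Val Rustichini k L S p x = Sup (indist_losses k L S p x)"
  unfolding Val_def indist_losses_def by simp

lemma indist_losses_nonempty: "inK x \<Longrightarrow> indist_losses k L S p x \<noteq> {}"
  unfolding indist_losses_def Rel_def by auto

lemma lossp_le_Val_Rustichini:
  assumes "inK y" "Rel k S y x" "unit_loss L"
  shows "lossp k L p y \<le> Val Rustichini k L S p x"
proof -
  have "bdd_above (indist_losses k L S p x)"
    using lossp_le_plus_dist[OF _ assms(3), where q = "\<lambda>_. 0"]
    by (intro bdd_aboveI[where M = "\<Sum>a<k. \<bar>p a\<bar>"]) (auto simp: indist_losses_def lossp_def)
  then show ?thesis
    unfolding Val_Rustichini using assms by (intro cSup_upper) (auto simp: indist_losses_def)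
qed

lemma Val_le_plus_dist:
  assumes "inK x" "unit_loss L"
  shows "Val st k L S p x \<le> Val st k L S q x + (\<Sum>a<k. \<bar>p a - q a\<bar>)"
proof (cases st)
  case Standard
  then show ?thesis using lossp_le_plus_dist[OF assms] by (simp add: Val_def)
next
  case Rustichini
  have "Sup (indist_losses k L S p x) \<le> Val Rustichini k L S q x + (\<Sum>a<k. \<bar>p a - q a\<bar>)"
  proof (rule cSup_least[OF indist_losses_nonempty[OF assms(1)]])
    fix v assume "v \<in> indist_losses k L S p x"
    then obtain y where y: "inK y" "Rel k S y x" "v = lossp k L p y"
      unfolding indist_losses_def by auto
    then show "v \<le> Val Rustichini k L S q x + (\<Sum>a<k. \<bar>p a - q a\<bar>)"
      using lossp_le_plus_dist[OF y(1) assms(2), where k = k and p = p and q = q]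
        lossp_le_Val_Rustichini[OF y(1,2) assms(2), where p = q]
      by fastforce
  qed
  then show ?thesis using Rustichini by (simp add: Val_Rustichini)
qed

lemma Val_mix_le:
  assumes "inK x" "unit_loss L" "0 \<le> e" "e \<le> 1"
  shows "Val st k L S (\<lambda>a. (1 - e) * q a + e * p a) x
           \<le> (1 - e) * Val st k L S q x + e * Val st k L S p x"
proof (cases st)
  case Standard
  then show ?thesis by (simp add: Val_def lossp_mix)
next
  case Rustichini
  have "Sup (indist_losses k L S (\<lambda>a. (1 - e) * q a + e * p a) x)
          \<le> (1 - e) * Val Rustichini k L S q x + e * Val Rustichini k L S p x"
  proof (rule cSup_least[OF indist_losses_nonempty[OF assms(1)]])
    fix v assume "v \<in> indist_losses k L S (\<lambda>a. (1 - e) * q a + e * p a) x"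
    then obtain y where y: "inK y" "Rel k S y x" "v = lossp k L (\<lambda>a. (1 - e) * q a + e * p a) y"
      unfolding indist_losses_def by auto
    have "(1 - e) * lossp k L q y \<le> (1 - e) * Val Rustichini k L S q x"
      using lossp_le_Val_Rustichini[OF y(1,2) assms(2)] assms(4) by (intro mult_left_mono) auto
    moreover have "e * lossp k L p y \<le> e * Val Rustichini k L S p x"
      using lossp_le_Val_Rustichini[OF y(1,2) assms(2)] assms(3) by (intro mult_left_mono) auto
    ultimately show "v \<le> (1 - e) * Val Rustichini k L S q x + e * Val Rustichini k L S p x"
      using y(3) by (simp add: lossp_mix)
  qed
  then show ?thesis using Rustichini by (simp add: Val_Rustichini)
qed

lemma Val_cong: "(\<And>a. a < k \<Longrightarrow> p a = q a) \<Longrightarrow> Val st k L S p x = Val st k L S q x"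
  unfolding Val_def lossp_def by (simp cong: setting.case_cong)

lemma Val_nonneg:
  assumes "inK x" "unit_loss L" "p \<in> simplex k"
  shows "0 \<le> Val st k L S p x"
proof (cases st)
  case Standard
  then show ?thesis using lossp_nonneg[OF assms] by (simp add: Val_def)
next
  case Rustichini
  then show ?thesis
    using lossp_nonneg[OF assms]
      lossp_le_Val_Rustichini[OF assms(1) _ assms(2), where k = k and x = x and S = S and p = p]
    by (simp add: Rel_def)
qed

lemma Valstar_le_Val:
  assumes "inK x" "unit_loss L" "p \<in> simplex k"
  shows "Valstar st k L S x \<le> Val st k L S p x"
proof (cases st)
  case Standard
  have "k > 0" using assms(3) by (auto simp: simplex_def intro: ccontr)
  let ?m = "Min ((\<lambda>a. lossx L a x) ` {..<k})"
  have "?m = (\<Sum>a<k. p a * ?m)" using assms(3) by (simp add: simplex_def flip: sum_distrib_right)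
  also have "\<dots> \<le> (\<Sum>a<k. p a * lossx L a x)"
    using assms(3) \<open>k > 0\<close> by (intro sum_mono mult_left_mono) (auto simp: simplex_def)
  finally show ?thesis using Standard by (simp add: Val_def Valstar_def lossp_def)
next
  case Rustichini
  have "Inf ((\<lambda>p. Val Rustichini k L S p x) ` simplex k) \<le> Val Rustichini k L S p x"
    using assms Val_nonneg[OF assms(1,2)] by (intro cInf_lower bdd_belowI[where m = 0]) auto
  then show ?thesis using Rustichini by (simp add: Valstar_def)
qed

lemma inPK_D:
  assumes "inPK mu"
  shows "\<And>x. 0 \<le> mu x" "finite (spt mu)" "sum mu (spt mu) = 1" "\<And>x. x \<in> spt mu \<Longrightarrow> inK x"
  using assms by (auto simp: inPK_def)

lemma Gap_mix_le:
  assumes "inPK mu" "unit_loss L" "0 \<le> e" "e \<le> 1"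
  shows "Gap st k L S (\<lambda>a. (1 - e) * q a + e * p a) mu
           \<le> (1 - e) * Gap st k L S q mu + e * Gap st k L S p mu"
proof -
  let ?gap = "\<lambda>p x. Val st k L S p x - Valstar st k L S x"
  have "Gap st k L S (\<lambda>a. (1 - e) * q a + e * p a) mu
          \<le> (\<Sum>x\<in>spt mu. mu x * ((1 - e) * ?gap q x + e * ?gap p x))"
    unfolding Gap_def
  proof (intro sum_mono mult_left_mono)
    fix x assume "x \<in> spt mu"
    with Val_mix_le[OF inPK_D(4)[OF assms(1)] assms(2-4),
        where st = st and k = k and S = S and q = q and p = p]
    show "?gap (\<lambda>a. (1 - e) * q a + e * p a) x \<le> (1 - e) * ?gap q x + e * ?gap p x"
      by (simp add: algebra_simps)
  qed (use inPK_D[OF assms(1)] in auto)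
  also have "\<dots> = (1 - e) * Gap st k L S q mu + e * Gap st k L S p mu"
    unfolding Gap_def by (simp add: distrib_left sum.distrib sum_distrib_left mult.left_commute)
  finally show ?thesis .
qed

lemma Gap_cong: "(\<And>a. a < k \<Longrightarrow> p a = q a) \<Longrightarrow> Gap st k L S p mu = Gap st k L S q mu"
  unfolding Gap_def by (simp cong: Val_cong)

lemma Gap_nonneg:
  assumes "inPK mu" "unit_loss L" "p \<in> simplex k"
  shows "0 \<le> Gap st k L S p mu"
  unfolding Gap_def using inPK_D[OF assms(1)] Valstar_le_Val[OF _ assms(2,3), where st = st and S = S]
  by (intro sum_nonneg mult_nonneg_nonneg) auto

lemma Gap_le_plus_dist:
  assumes "inPK mu" "unit_loss L"
  shows "Gap st k L S p mu \<le> Gap st k L S q mu + (\<Sum>a<k. \<bar>p a - q a\<bar>)"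
proof -
  note m = inPK_D[OF assms(1)]
  have "Gap st k L S p mu - Gap st k L S q mu
          = (\<Sum>x\<in>spt mu. mu x * (Val st k L S p x - Val st k L S q x))"
    unfolding Gap_def by (simp add: sum_subtractf right_diff_distrib)
  also have "\<dots> \<le> (\<Sum>x\<in>spt mu. mu x * (\<Sum>a<k. \<bar>p a - q a\<bar>))"
    using m Val_le_plus_dist[OF _ assms(2), where st = st and k = k and S = S and p = p and q = q]
    by (intro sum_mono mult_left_mono) (auto simp: algebra_simps)
  also have "\<dots> = (\<Sum>a<k. \<bar>p a - q a\<bar>)" using m by (simp flip: sum_distrib_right)
  finally show ?thesis by simp
qed

lemma tendsto_l1_dist: "((\<lambda>p::nat \<Rightarrow> real. \<Sum>a<k. \<bar>p a - q a\<bar>) \<longlongrightarrow> 0) (at q within A)"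
proof -
  have "continuous_on UNIV (\<lambda>p::nat \<Rightarrow> real. \<Sum>a<k. \<bar>p a - q a\<bar>)"
    by (intro continuous_intros continuous_on_product_coordinates)
  then show ?thesis
    unfolding continuous_on_def
    by (metis (no_types, lifting) UNIV_I abs_eq_0_iff diff_self sum.neutral tendsto_within_subset subset_UNIV)
qed

lemma continuous_on_Gap:
  assumes "inPK mu" "unit_loss L"
  shows "continuous_on A (\<lambda>p. Gap st k L S p mu)"
  unfolding continuous_on_def
proof (intro ballI)
  fix q assume "q \<in> A"
  have "\<bar>Gap st k L S p mu - Gap st k L S q mu\<bar> \<le> (\<Sum>a<k. \<bar>p a - q a\<bar>)" for p
    using Gap_le_plus_dist[OF assms, of st k S p q] Gap_le_plus_dist[OF assms, of st k S q p]
    by (simp add: abs_minus_commute)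
  then have "((\<lambda>p. Gap st k L S p mu - Gap st k L S q mu) \<longlongrightarrow> 0) (at q within A)"
    by (intro Lim_null_comparison[OF _ tendsto_l1_dist[where k = k]]) (auto intro: always_eventually)
  then show "((\<lambda>p. Gap st k L S p mu) \<longlongrightarrow> Gap st k L S q mu) (at q within A)"
    by (simp add: LIM_zero_iff)
qed

text \<open>Policies are functions on all of \<open>nat\<close>; those vanishing beyond \<open>k\<close> form a
  compact part of the simplex on which every value of \<open>\<Delta>(\<cdot>,\<mu>)\<close> is already taken.\<close>

definition simplex_restr :: "nat \<Rightarrow> (nat \<Rightarrow> real) set" where
  "simplex_restr k = PiE UNIV (\<lambda>a. if a < k then {0..1} else {0}) \<inter> {p. (\<Sum>a<k. p a) = 1}"

lemma compact_simplex_restr: "compact (simplex_restr k)"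
proof -
  have "compactin (product_topology (\<lambda>_. euclidean) UNIV)
          (PiE UNIV (\<lambda>a::nat. if a < k then {0..1::real} else {0}))"
    by (subst compactin_PiE) auto
  then have "compact (PiE UNIV (\<lambda>a::nat. if a < k then {0..1::real} else {0}))"
    by (simp add: euclidean_product_topology)
  moreover have "closed {p::nat \<Rightarrow> real. (\<Sum>a<k. p a) = 1}"
    by (intro closed_Collect_eq continuous_intros continuous_on_product_coordinates)
  ultimately show ?thesis unfolding simplex_restr_def by auto
qed

lemma simplex_restr_subset: "simplex_restr k \<subseteq> simplex k"
  unfolding simplex_restr_def simplex_def by (auto simp: PiE_iff) (metis atLeastAtMost_iff)

lemma restrict_in_simplex_restr:
  assumes "p \<in> simplex k"
  shows "(\<lambda>a. if a < k then p a else 0) \<in> simplex_restr k"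
proof -
  have "p a \<le> 1" if "a < k" for a
  proof -
    have "p a \<le> (\<Sum>a<k. p a)" using assms that by (intro member_le_sum) (auto simp: simplex_def)
    then show ?thesis using assms by (simp add: simplex_def)
  qed
  then show ?thesis
    using assms unfolding simplex_restr_def simplex_def by (auto simp: PiE_def Pi_def extensional_def)
qed

lemma Gapstar_attained:
  assumes "inPK mu" "unit_loss L" "simplex k \<noteq> {}"
  obtains q where "q \<in> simplex k" "Gapstar st k L S mu = Gap st k L S q mu"
proof -
  obtain p where "p \<in> simplex k" using assms(3) by blast
  then have "simplex_restr k \<noteq> {}" using restrict_in_simplex_restr by blast
  from continuous_attains_inf[OF compact_simplex_restr this continuous_on_Gap[OF assms(1,2)]]
  obtain q where q: "q \<in> simplex_restr k"
    and q_min: "\<And>p. p \<in> simplex_restr k \<Longrightarrow> Gap st k L S q mu \<le> Gap st k L S p mu"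
    by blast
  have "Gap st k L S q mu \<le> Gap st k L S p mu" if "p \<in> simplex k" for p
    using q_min[OF restrict_in_simplex_restr[OF that]] by (simp cong: Gap_cong)
  moreover have "q \<in> simplex k" using q simplex_restr_subset by auto
  ultimately have "Gapstar st k L S mu = Gap st k L S q mu"
    unfolding Gapstar_def by (intro cInf_eq_minimum) auto
  with \<open>q \<in> simplex k\<close> show ?thesis by (rule that)
qed

lemma Gapstar_le_Gap:
  assumes "inPK mu" "unit_loss L" "p \<in> simplex k"
  shows "Gapstar st k L S mu \<le> Gap st k L S p mu"
  unfolding Gapstar_def using assms Gap_nonneg[OF assms(1,2)]
  by (intro cInf_lower bdd_belowI[where m = 0]) auto

lemma mix_in_simplex:
  assumes "p \<in> simplex k" "q \<in> simplex k" "0 \<le> e" "e \<le> 1"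
  shows "(\<lambda>a. (1 - e) * q a + e * p a) \<in> simplex k"
  using assms unfolding simplex_def by (auto simp: sum.distrib simp flip: sum_distrib_left)

lemma inK_sum_le_one:
  assumes "inK x" "finite F"
  shows "sum x F \<le> 1"
proof -
  have "sum x F = sum x (F \<inter> spt x)"
    using assms(2) by (intro sum.mono_neutral_right) (auto simp: spt_def)
  also have "\<dots> \<le> sum x (spt x)"
    using assms by (intro sum_mono2) (auto simp: inK_def)
  finally show ?thesis using assms(1) by (simp add: inK_def)
qed

lemma KL_nonneg:
  assumes "inK P" "inK Q"
  shows "0 \<le> KL P Q"
proof (cases "\<exists>s. P s > 0 \<and> Q s = 0")
  case True
  then show ?thesis by (simp add: KL_def)
next
  case False
  have "(\<Sum>s\<in>spt P. P s - Q s) \<le> (\<Sum>s\<in>spt P. P s * ln (P s / Q s))"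
  proof (intro sum_mono)
    fix s assume "s \<in> spt P"
    then have p: "P s > 0" using assms(1) by (auto simp: spt_def inK_def less_le)
    moreover have "0 \<le> Q s" using assms(2) by (simp add: inK_def)
    ultimately have q: "Q s > 0" using False by force
    have "ln (Q s / P s) \<le> Q s / P s - 1" using p q by (intro ln_le_minus_one) auto
    moreover have "ln (P s / Q s) = - ln (Q s / P s)" using p q by (simp add: ln_div)
    ultimately have "P s * (1 - Q s / P s) \<le> P s * ln (P s / Q s)"
      using p by (intro mult_left_mono) auto
    then show "P s - Q s \<le> P s * ln (P s / Q s)" using p by (simp add: algebra_simps)
  qed
  moreover have "0 \<le> (\<Sum>s\<in>spt P. P s - Q s)"
    using assms inK_sum_le_one[OF assms(2), of "spt P"] by (simp add: sum_subtractf inK_def)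
  ultimately show ?thesis using False by (simp add: KL_def)
qed

lemma inK_sig:
  assumes "inK x"
  shows "inK (sig S a x)"
proof -
  have x: "\<And>z. 0 \<le> x z" "finite (spt x)" "sum x (spt x) = 1" using assms by (auto simp: inK_def)
  have "sig S a x s = 0" if "s \<notin> S a ` spt x" for s
    unfolding sig_def using that by (auto intro!: sum.neutral)
  then have spt_sig: "spt (sig S a x) \<subseteq> S a ` spt x" by (auto simp: spt_def)
  have "sum (sig S a x) (spt (sig S a x)) = sum (sig S a x) (S a ` spt x)"
    using spt_sig x(2) by (intro sum.mono_neutral_left) (auto simp: spt_def)
  also have "\<dots> = 1"
    unfolding sig_def using sum.image_gen[OF x(2), of x "S a"] x(3) by simp
  moreover have "finite (spt (sig S a x))" using spt_sig x(2) by (blast intro: finite_surj)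
  ultimately show ?thesis
    using x(1) unfolding inK_def by (auto simp: sig_def intro: sum_nonneg)
qed

lemma inK_mean:
  assumes "inPK mu"
  shows "inK (mean mu)"
proof -
  note m = inPK_D[OF assms]
  have xK: "\<And>x. x \<in> spt mu \<Longrightarrow> (\<forall>z. 0 \<le> x z) \<and> finite (spt x) \<and> sum x (spt x) = 1"
    using m(4) by (auto simp: inK_def)
  define U where "U = (\<Union>x\<in>spt mu. spt x)"
  have "finite U" unfolding U_def using m(2) xK by blast
  have spt_mean: "spt (mean mu) \<subseteq> U"
  proof
    fix z assume "z \<in> spt (mean mu)"
    then have "(\<Sum>x\<in>spt mu. mu x * x z) \<noteq> 0" by (simp add: spt_def mean_def)
    then obtain x where "x \<in> spt mu" "mu x * x z \<noteq> 0" by (meson sum.neutral)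
    then show "z \<in> U" unfolding U_def spt_def by auto
  qed
  have "sum (mean mu) (spt (mean mu)) = sum (mean mu) U"
    using spt_mean \<open>finite U\<close> by (intro sum.mono_neutral_left) (auto simp: spt_def)
  also have "\<dots> = (\<Sum>x\<in>spt mu. mu x * sum x U)"
    unfolding mean_def by (subst sum.swap) (simp only: sum_distrib_left)
  also have "\<dots> = (\<Sum>x\<in>spt mu. mu x)"
  proof (intro sum.cong refl)
    fix x assume x: "x \<in> spt mu"
    have "sum x U = sum x (spt x)"
      using x \<open>finite U\<close> by (intro sum.mono_neutral_right) (auto simp: spt_def U_def)
    then show "mu x * sum x U = mu x" using xK[OF x] by simp
  qed
  finally show ?thesis
    using m spt_mean \<open>finite U\<close> xK finite_subset unfolding inK_def mean_def
    by (auto intro!: sum_nonneg)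
qed

lemma Info_nonneg:
  assumes "inPK mu" "p \<in> simplex k"
  shows "0 \<le> Info k S p mu"
  unfolding Info_def using assms(2)
  by (intro sum_nonneg ereal_0_le_mult)
     (auto simp: simplex_def intro!: KL_nonneg inK_sig inK_mean[OF assms(1)] inPK_D(4)[OF assms(1)])

lemma Info_mix_ge:
  assumes "inPK mu" "p \<in> simplex k" "q \<in> simplex k" "0 \<le> e" "e \<le> 1"
  shows "ereal e * Info k S p mu \<le> Info k S (\<lambda>a. (1 - e) * q a + e * p a) mu"
proof -
  let ?T = "\<lambda>a. \<Sum>x\<in>spt mu. KL (sig S a (mean mu)) (sig S a x)"
  have T: "0 \<le> ?T a" for a
    by (intro sum_nonneg KL_nonneg inK_sig inK_mean[OF assms(1)] inPK_D(4)[OF assms(1)])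
  have "ereal e * Info k S p mu = (\<Sum>a<k. ereal e * (ereal (p a) * ?T a))"
    unfolding Info_def using T assms(2)
    by (intro sum_ereal_right_distrib) (auto simp: simplex_def)
  also have "\<dots> = (\<Sum>a<k. ereal (e * p a) * ?T a)"
    by (simp flip: times_ereal.simps(1) add: mult.assoc)
  also have "\<dots> \<le> (\<Sum>a<k. ereal ((1 - e) * q a + e * p a) * ?T a)"
    using assms(3,5) T by (intro sum_mono ereal_mult_right_mono) (auto simp: simplex_def)
  finally show ?thesis by (simp add: Info_def)
qed

lemma ediv_zero_left [simp]: "ediv 0 I = 0"
  by (cases I) (auto simp: ediv_def)

lemma ediv_nonneg:
  assumes "0 \<le> c" "0 \<le> I"
  shows "0 \<le> ediv c I"
  using assms by (cases I) (auto simp: ediv_def)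

lemma ediv_le_ediv_scaled:
  assumes "0 \<le> c" "c \<le> c'" "0 < e" "0 \<le> I" "ereal e * I \<le> I'"
  shows "ediv c I' \<le> ediv (c' / e) I"
proof (cases I)
  case (real r)
  show ?thesis
  proof (cases "r = 0")
    case True
    show ?thesis
    proof (cases "c' = 0")
      case True
      then show ?thesis using assms(1,2) by simp
    next
      case False
      then show ?thesis using \<open>r = 0\<close> real assms(3) by (simp add: ediv_def zero_ereal_def)
    qed
  next
    case False
    then have "0 < e * r" using real assms(3,4) by simp
    moreover have "ereal (e * r) \<le> I'" using real assms(5) by simp
    ultimately show ?thesis
      using real False assms(1-3) ediv_nonneg[of "c' / e" I]
      by (cases I') (auto simp: ediv_def intro!: frac_le)
  qed
next
  case PInf
  then have "I' = \<infinity>" using assms(3,5) by simp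
  then show ?thesis using PInf by (simp add: ediv_def)
qed (use assms(4) in simp)

lemma Psistar_le_mixture_bound:
  assumes "inPK mu" "unit_loss L" "0 \<le> lam" "p \<in> simplex k" "q \<in> simplex k"
    and "Gap st k L S q mu \<le> Gap st k L S p mu"
  shows "Psistar lam st k L S mu
           \<le> ediv (2 powr lam * Gap st k L S q mu powr (lam - 1) * Gap st k L S p mu) (Info k S p mu)"
proof -
  define ds d where "ds = Gap st k L S q mu" and "d = Gap st k L S p mu"
  have Psistar_le: "Psistar lam st k L S mu \<le> Psi lam st k L S p' mu" if "p' \<in> simplex k" for p'
    unfolding Psistar_def using that by (rule INF_lower)
  have "0 \<le> ds" "ds \<le> d" unfolding ds_def d_def using Gap_nonneg[OF assms(1,2,5)] assms(6) by auto
  have I: "0 \<le> Info k S p mu" by (rule Info_nonneg[OF assms(1,4)])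
  have "Psistar lam st k L S mu \<le> ediv (2 powr lam * ds powr (lam - 1) * d) (Info k S p mu)"
  proof (cases "ds = 0")
    case True
    then have "Psi lam st k L S q mu = 0" by (simp add: Psi_def ds_def)
    moreover have "0 \<le> ediv (2 powr lam * ds powr (lam - 1) * d) (Info k S p mu)"
      using \<open>0 \<le> ds\<close> \<open>ds \<le> d\<close> I by (intro ediv_nonneg) auto
    ultimately show ?thesis using Psistar_le[OF assms(5)] by simp
  next
    case False
    define e where "e = ds / d"
    define p' where "p' = (\<lambda>a. (1 - e) * q a + e * p a)"
    have "0 < ds" "0 < e" "e \<le> 1" "e * d = ds"
      using False \<open>0 \<le> ds\<close> \<open>ds \<le> d\<close> by (auto simp: e_def)
    have p': "p' \<in> simplex k"
      unfolding p'_def using \<open>0 < e\<close> \<open>e \<le> 1\<close> by (intro mix_in_simplex assms(4,5)) auto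
    have "Gap st k L S p' mu \<le> (1 - e) * ds + e * d"
      unfolding p'_def ds_def d_def using \<open>0 < e\<close> \<open>e \<le> 1\<close> by (intro Gap_mix_le assms(1,2)) auto
    also have "\<dots> \<le> 2 * ds"
      using \<open>e * d = ds\<close> \<open>0 < e\<close> \<open>0 < ds\<close> by (simp add: algebra_simps)
    finally have "Gap st k L S p' mu powr lam \<le> (2 * ds) powr lam"
      using Gap_nonneg[OF assms(1,2) p'] assms(3) by (intro powr_mono2) auto
    moreover have "ereal e * Info k S p mu \<le> Info k S p' mu"
      unfolding p'_def using \<open>0 < e\<close> \<open>e \<le> 1\<close> by (intro Info_mix_ge assms(1,4,5)) auto
    ultimately have "Psi lam st k L S p' mu \<le> ediv ((2 * ds) powr lam / e) (Info k S p mu)"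
      unfolding Psi_def using \<open>0 < e\<close> I by (intro ediv_le_ediv_scaled) auto
    also have "(2 * ds) powr lam / e = 2 powr lam * ds powr (lam - 1) * d"
      using \<open>0 < ds\<close> \<open>e * d = ds\<close> \<open>0 < e\<close> by (simp add: powr_mult powr_diff field_simps)
    finally show ?thesis using Psistar_le[OF p'] by simp
  qed
  then show ?thesis by (simp add: ds_def d_def)
qed

theorem lemma2:
  fixes lam :: real and st :: setting and k :: nat
    and L :: "nat \<Rightarrow> 'z \<Rightarrow> real" and S :: "nat \<Rightarrow> 'z \<Rightarrow> 's"
    and mu :: "('z \<Rightarrow> real) \<Rightarrow> real" and p :: "nat \<Rightarrow> real"
  assumes "lam > 1"
    and "\<And>a z. 0 \<le> L a z \<and> L a z \<le> 1"
    and "st = Rustichini \<Longrightarrow> finite (UNIV :: 'z set)"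
    and "inPK mu"
    and "p \<in> simplex k"
  shows "Psistar lam st k L S mu \<le>
    ediv (2 powr lam * Gapstar st k L S mu powr (lam - 1) * Gap st k L S p mu) (Info k S p mu)"
proof -
  have L: "unit_loss L" using assms(2) by (simp add: unit_loss_def)
  obtain q where q: "q \<in> simplex k" and q_min: "Gapstar st k L S mu = Gap st k L S q mu"
    using Gapstar_attained[OF assms(4) L] assms(5) by blast
  have "Gap st k L S q mu \<le> Gap st k L S p mu"
    using Gapstar_le_Gap[OF assms(4) L assms(5)] q_min by metis
  then show ?thesis
    unfolding q_min using assms(1) by (intro Psistar_le_mixture_bound[OF assms(4) L _ assms(5) q]) auto
qed

end
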